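(* The logic $\mathsf{LCA}$ is sound and complete for the class of all models: for every $\varphi\in\mathcal{L}$, $\varphi$ is a theorem of $\mathsf{LCA}$ iff $\varphi$ is valid (true in every model $(S,U)$). Here $\mathsf{LCA}$ is the extension of classical propositional logic (over $\mathcal{L}$) by the following axioms and rules, for all $i\in\mathit{Agt}$, $\alpha\in\mathcal{L}_0$, $\varphi,\psi\in\mathcal{L}$, and $\circledcirc\in\{\mathcal{A}_i,\mathcal{R}_i,\mathcal{A}^{\mathsf{real}}_i,\mathcal{R}^{\mathsf{real}}_i\}$: (A1) $(\Box_i\varphi\wedge\Box_i(\varphi\to\psi))\to\Box_i\psi$; (A2) $(\circledcirc\varphi\wedge\circledcirc(\neg\varphi\wedge\psi))\to\circledcirc\psi$; (A3) $\triangle_i\alpha\to\Box_i\alpha$; (A4) $\triangle_i(\alpha\to\mathsf{rew}_i)\to\mathcal{A}_i\alpha$; (A5) $\triangle_i(\alpha\to\mathsf{pun}_i)\to\mathcal{R}_i\alpha$; (A6) $\mathcal{A}_i\varphi\to\mathcal{A}^{\mathsf{real}}_i\varphi$; (A7) $\mathcal{R}_i\varphi\to\mathcal{R}^{\mathsf{real}}_i\varphi$; (A8) $\Box_i\varphi\to\mathcal{A}^{\mathsf{real}}_i\neg\varphi$; (A9) $\Box_i\varphi\to\mathcal{R}^{\mathsf{real}}_i\neg\varphi$; (A10) $\mathcal{A}^{\mathsf{real}}_i\varphi\to\Box_i(\varphi\to\mathsf{rew}_i)$; (A11) $\mathcal{R}^{\mathsf{real}}_i\varphi\to\Box_i(\varphi\to\mathsf{pun}_i)$;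 (R1) from $\varphi$ infer $\Box_i\varphi$; (R2) from $\varphi$ infer $\circledcirc\neg\varphi$; (R3) from $\varphi\leftrightarrow\psi$ infer $\circledcirc\varphi\leftrightarrow\circledcirc\psi$.
   Context: Let $\mathit{Agt}=\{1,\dots,n\}$ be a finite set of agents and $\mathit{Atm}$ a countably infinite set of atoms containing, for each $i\in\mathit{Agt}$, special atoms $\mathsf{rew}_i$ and $\mathsf{pun}_i$. The language $\mathcal{L}_0$ is given by $\alpha::=p\mid\neg\alpha\mid\alpha\wedge\alpha\mid \triangle_i\alpha$ ($p\in\mathit{Atm}$, $i\in\mathit{Agt}$); $\to,\vee,\leftrightarrow,\top,\bot$ are the usual abbreviations. A state is a tuple $S=((B_i)_{i\in\mathit{Agt}},V)$ with $B_i\subseteq\mathcal{L}_0$ and $V\subseteq\mathit{Atm}$; $\mathbf{S}$ is the set of all states. Truth of $\mathcal{L}_0$-formulas: $S\models p$ iff $p\in V$; Boolean clauses as usual; $S\models\triangle_i\alpha$ iff $\alpha\in B_i$. Define $\mathit{Des}_i(S)=\{\alpha\in\mathcal{L}_0:(\alpha\to\mathsf{rew}_i)\in B_i\}$ and $\mathit{Und}_i(S)=\{\alpha\in\mathcal{L}_0:(\alpha\to\mathsf{pun}_i)\in B_i\}$. Relations on $\mathbf{S}$: $S\,\mathcal{E}_i\,S'$ iff $S'\models\alpha$ for all $\alpha\in B_i$; $S\,\mathcal{A}_i\,S'$ iff $S'\models\alpha$ for some $\alpha\in\mathit{Des}_i(S)$; $S\,\mathcal{R}_i\,S'$ iff $S'\models\alpha$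 for some $\alpha\in\mathit{Und}_i(S)$. A model is a pair $(S,U)$ with $S\in U\subseteq\mathbf{S}$. The language $\mathcal{L}$ is $\varphi::=\alpha\mid\neg\varphi\mid\varphi\wedge\varphi\mid\Box_i\varphi\mid\mathcal{A}_i\varphi\mid\mathcal{R}_i\varphi\mid\mathcal{A}^{\mathsf{real}}_i\varphi\mid\mathcal{R}^{\mathsf{real}}_i\varphi$ with $\alpha\in\mathcal{L}_0$. Semantics: $(S,U)\models\alpha$ iff $S\models\alpha$; Boolean clauses as usual; $(S,U)\models\Box_i\varphi$ iff for all $S'\in U$ with $S\mathcal{E}_iS'$, $(S',U)\models\varphi$; $(S,U)\models\mathcal{A}_i\varphi$ iff for all $S'\in U$ with $(S',U)\models\varphi$, $S\mathcal{A}_iS'$; $(S,U)\models\mathcal{R}_i\varphi$ iff for all $S'\in U$ with $(S',U)\models\varphi$, $S\mathcal{R}_iS'$; $(S,U)\models\mathcal{A}^{\mathsf{real}}_i\varphi$ iff for all $S'\in U$ with $(S',U)\models\varphi$ and $S\mathcal{E}_iS'$, $S\mathcal{A}_iS'$; $(S,U)\models\mathcal{R}^{\mathsf{real}}_i\varphi$ iff for all $S'\in U$ with $(S',U)\models\varphi$ and $S\mathcal{E}_iS'$, $S\mathcal{R}_iS'$. *)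

theory Defs
  imports Main "HOL-Library.Countable"
begin

datatype mkind = MA | MR | MAreal | MRreal

text \<open>One datatype for all formulas; L0 and L are carved out by predicates
  (the argument of the triangle operator must be an L0 formula).
  'a = atoms, 'g = agents.\<close>
datatype ('a, 'g) fm =
    Atom 'a
  | Neg "('a, 'g) fm"
  | Conj "('a, 'g) fm" "('a, 'g) fm"
  | Tri 'g "('a, 'g) fm"
  | Box 'g "('a, 'g) fm"
  | Mod mkind 'g "('a, 'g) fm"

definition Imp :: "('a, 'g) fm \<Rightarrow> ('a, 'g) fm \<Rightarrow> ('a, 'g) fm" where
  "Imp p q = Neg (Conj p (Neg q))"

definition Iff :: "('a, 'g) fm \<Rightarrow> ('a, 'g) fm \<Rightarrow> ('a, 'g) fm" where
  "Iff p q = Conj (Imp p q) (Imp q p)"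

fun is_L0 :: "('a, 'g) fm \<Rightarrow> bool" where
  "is_L0 (Atom p) = True"
| "is_L0 (Neg a) = is_L0 a"
| "is_L0 (Conj a b) = (is_L0 a \<and> is_L0 b)"
| "is_L0 (Tri i a) = is_L0 a"
| "is_L0 (Box i a) = False"
| "is_L0 (Mod k i a) = False"

fun is_L :: "('a, 'g) fm \<Rightarrow> bool" where
  "is_L (Atom p) = True"
| "is_L (Neg a) = is_L a"
| "is_L (Conj a b) = (is_L a \<and> is_L b)"
| "is_L (Tri i a) = is_L0 a"
| "is_L (Box i a) = is_L a"
| "is_L (Mod k i a) = is_L a"

text \<open>A state: belief bases B_i (sets of L0 formulas) and a valuation V.\<close>
type_synonym ('a, 'g) state = "('g \<Rightarrow> ('a, 'g) fm set) \<times> 'a set"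

definition states :: "('a, 'g) state set" where
  "states = {S. \<forall>i. \<forall>a \<in> fst S i. is_L0 a}"

text \<open>Truth of L0 formulas at a state (only meaningful on L0).\<close>
fun sat0 :: "('a, 'g) state \<Rightarrow> ('a, 'g) fm \<Rightarrow> bool" where
  "sat0 S (Atom p) = (p \<in> snd S)"
| "sat0 S (Neg a) = (\<not> sat0 S a)"
| "sat0 S (Conj a b) = (sat0 S a \<and> sat0 S b)"
| "sat0 S (Tri i a) = (a \<in> fst S i)"
| "sat0 S (Box i a) = False"
| "sat0 S (Mod k i a) = False"

definition Des :: "('g \<Rightarrow> 'a) \<Rightarrow> 'g \<Rightarrow> ('a, 'g) state \<Rightarrow> ('a, 'g) fm set" where
  "Des rew i S = {a. is_L0 a \<and> Imp a (Atom (rew i)) \<in> fst S i}"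

definition Und :: "('g \<Rightarrow> 'a) \<Rightarrow> 'g \<Rightarrow> ('a, 'g) state \<Rightarrow> ('a, 'g) fm set" where
  "Und pun i S = {a. is_L0 a \<and> Imp a (Atom (pun i)) \<in> fst S i}"

definition relE :: "'g \<Rightarrow> ('a, 'g) state \<Rightarrow> ('a, 'g) state \<Rightarrow> bool" where
  "relE i S S' = (\<forall>a \<in> fst S i. sat0 S' a)"

definition relA :: "('g \<Rightarrow> 'a) \<Rightarrow> 'g \<Rightarrow> ('a, 'g) state \<Rightarrow> ('a, 'g) state \<Rightarrow> bool" where
  "relA rew i S S' = (\<exists>a \<in> Des rew i S. sat0 S' a)"

definition relR :: "('g \<Rightarrow> 'a) \<Rightarrow> 'g \<Rightarrow> ('a, 'g) state \<Rightarrow> ('a, 'g) state \<Rightarrow> bool" where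
  "relR pun i S S' = (\<exists>a \<in> Und pun i S. sat0 S' a)"

fun sat :: "('g \<Rightarrow> 'a) \<Rightarrow> ('g \<Rightarrow> 'a) \<Rightarrow> ('a, 'g) state set \<Rightarrow> ('a, 'g) state
             \<Rightarrow> ('a, 'g) fm \<Rightarrow> bool" where
  "sat rew pun U S (Atom p) = sat0 S (Atom p)"
| "sat rew pun U S (Tri i a) = sat0 S (Tri i a)"
| "sat rew pun U S (Neg a) = (\<not> sat rew pun U S a)"
| "sat rew pun U S (Conj a b) = (sat rew pun U S a \<and> sat rew pun U S b)"
| "sat rew pun U S (Box i a) = (\<forall>S' \<in> U. relE i S S' \<longrightarrow> sat rew pun U S' a)"
| "sat rew pun U S (Mod MA i a) = (\<forall>S' \<in> U. sat rew pun U S' a \<longrightarrow> relA rew i S S')"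
| "sat rew pun U S (Mod MR i a) = (\<forall>S' \<in> U. sat rew pun U S' a \<longrightarrow> relR pun i S S')"
| "sat rew pun U S (Mod MAreal i a) =
     (\<forall>S' \<in> U. sat rew pun U S' a \<and> relE i S S' \<longrightarrow> relA rew i S S')"
| "sat rew pun U S (Mod MRreal i a) =
     (\<forall>S' \<in> U. sat rew pun U S' a \<and> relE i S S' \<longrightarrow> relR pun i S S')"

definition valid :: "('g \<Rightarrow> 'a) \<Rightarrow> ('g \<Rightarrow> 'a) \<Rightarrow> ('a, 'g) fm \<Rightarrow> bool" where
  "valid rew pun p = (\<forall>U S. U \<subseteq> states \<longrightarrow> S \<in> U \<longrightarrow> sat rew pun U S p)"

text \<open>Propositional tautologies over L: every formula whose main connective
  is not a Boolean one is treated as a propositional variable.\<close>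
fun pc_eval :: "(('a, 'g) fm \<Rightarrow> bool) \<Rightarrow> ('a, 'g) fm \<Rightarrow> bool" where
  "pc_eval v (Neg a) = (\<not> pc_eval v a)"
| "pc_eval v (Conj a b) = (pc_eval v a \<and> pc_eval v b)"
| "pc_eval v (Atom p) = v (Atom p)"
| "pc_eval v (Tri i a) = v (Tri i a)"
| "pc_eval v (Box i a) = v (Box i a)"
| "pc_eval v (Mod k i a) = v (Mod k i a)"

definition tautology :: "('a, 'g) fm \<Rightarrow> bool" where
  "tautology p = (\<forall>v. pc_eval v p)"

inductive LCA :: "('g \<Rightarrow> 'a) \<Rightarrow> ('g \<Rightarrow> 'a) \<Rightarrow> ('a, 'g) fm \<Rightarrow> bool"
  for rew :: "'g \<Rightarrow> 'a" and pun :: "'g \<Rightarrow> 'a" where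
  PC: "is_L p \<Longrightarrow> tautology p \<Longrightarrow> LCA rew pun p"
| MP: "LCA rew pun (Imp p q) \<Longrightarrow> LCA rew pun p \<Longrightarrow> LCA rew pun q"
| A1: "is_L p \<Longrightarrow> is_L q \<Longrightarrow>
        LCA rew pun (Imp (Conj (Box i p) (Box i (Imp p q))) (Box i q))"
| A2: "is_L p \<Longrightarrow> is_L q \<Longrightarrow>
        LCA rew pun (Imp (Conj (Mod k i p) (Mod k i (Conj (Neg p) q))) (Mod k i q))"
| A3: "is_L0 a \<Longrightarrow> LCA rew pun (Imp (Tri i a) (Box i a))"
| A4: "is_L0 a \<Longrightarrow> LCA rew pun (Imp (Tri i (Imp a (Atom (rew i)))) (Mod MA i a))"
| A5: "is_L0 a \<Longrightarrow> LCA rew pun (Imp (Tri i (Imp a (Atom (pun i)))) (Mod MR i a))"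
| A6: "is_L p \<Longrightarrow> LCA rew pun (Imp (Mod MA i p) (Mod MAreal i p))"
| A7: "is_L p \<Longrightarrow> LCA rew pun (Imp (Mod MR i p) (Mod MRreal i p))"
| A8: "is_L p \<Longrightarrow> LCA rew pun (Imp (Box i p) (Mod MAreal i (Neg p)))"
| A9: "is_L p \<Longrightarrow> LCA rew pun (Imp (Box i p) (Mod MRreal i (Neg p)))"
| A10: "is_L p \<Longrightarrow> LCA rew pun (Imp (Mod MAreal i p) (Box i (Imp p (Atom (rew i)))))"
| A11: "is_L p \<Longrightarrow> LCA rew pun (Imp (Mod MRreal i p) (Box i (Imp p (Atom (pun i)))))"
| R1: "LCA rew pun p \<Longrightarrow> LCA rew pun (Box i p)"
| R2: "LCA rew pun p \<Longrightarrow> LCA rew pun (Mod k i (Neg p))"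
| R3: "LCA rew pun (Iff p q) \<Longrightarrow> LCA rew pun (Iff (Mod k i p) (Mod k i q))"

end

theory Submission
  imports Defs
begin

(* For completeness, a formula that is not a theorem is refuted in a finite model built from
  maximal consistent subsets ("worlds") of the closure of the formula and of the reward and
  punishment atoms.  Every world w occurs as two states (w, True) and (w, False), and each
  such state t gets a private atom x_t outside the closure (this is where the infinitude of
  the atom set is used).  The belief base of agent i at w consists of the triangle-formulas
  of w, the literals \<not>x_t for the states that must not be E_i-accessible, and the
  implications x_t \<rightarrow> rew_i (x_t \<rightarrow> pun_i) for the states that must be
  A_i- (R_i-) accessible.  States (w, False) are never E_i-accessible, which lets the ideal
  modalities differ from their "real" variants.  The canonical axioms make the required
  witnesses consistent, and a truth lemma shows that a closure formula holds at (w, b) iff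
  it belongs to w. *)

lemma is_L0_imp_is_L: "is_L0 a \<Longrightarrow> is_L a"
  by (induction a) auto

lemma LCA_is_L: "LCA rew pun p \<Longrightarrow> is_L p"
  by (induction rule: LCA.induct) (auto simp: Imp_def Iff_def is_L0_imp_is_L)

definition Top :: "('a, 'g) fm" where
  "Top = Imp (Atom undefined) (Atom undefined)"

definition Bot :: "('a, 'g) fm" where
  "Bot = Neg Top"

definition Or :: "('a, 'g) fm \<Rightarrow> ('a, 'g) fm \<Rightarrow> ('a, 'g) fm" where
  "Or a b = Neg (Conj (Neg a) (Neg b))"

fun conjs :: "('a, 'g) fm list \<Rightarrow> ('a, 'g) fm" where
  "conjs [] = Top"
| "conjs (x # xs) = Conj x (conjs xs)"

fun disjs :: "('a, 'g) fm list \<Rightarrow> ('a, 'g) fm" where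
  "disjs [] = Bot"
| "disjs (x # xs) = Or x (disjs xs)"

lemma pc_eval_connectives [simp]:
  "pc_eval v Top" "\<not> pc_eval v Bot"
  "pc_eval v (Imp a b) = (pc_eval v a \<longrightarrow> pc_eval v b)"
  "pc_eval v (Iff a b) = (pc_eval v a \<longleftrightarrow> pc_eval v b)"
  "pc_eval v (Or a b) = (pc_eval v a \<or> pc_eval v b)"
  by (auto simp: Top_def Bot_def Imp_def Iff_def Or_def)

lemma pc_eval_conjs [simp]: "pc_eval v (conjs xs) = (\<forall>x\<in>set xs. pc_eval v x)"
  by (induction xs) auto

lemma pc_eval_disjs [simp]: "pc_eval v (disjs xs) = (\<exists>x\<in>set xs. pc_eval v x)"
  by (induction xs) auto

lemma is_L_connectives [simp]:
  "is_L (Top :: ('a, 'g) fm)" "is_L (Bot :: ('a, 'g) fm)"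
  "is_L (Imp a b) = (is_L a \<and> is_L b)"
  "is_L (Iff a b) = (is_L a \<and> is_L b)"
  "is_L (Or a b) = (is_L a \<and> is_L b)"
  by (auto simp: Top_def Bot_def Imp_def Iff_def Or_def)

lemma is_L0_Imp [simp]: "is_L0 (Imp a b) = (is_L0 a \<and> is_L0 b)"
  by (auto simp: Imp_def)

lemma is_L_conjs [simp]: "is_L (conjs xs) = (\<forall>x\<in>set xs. is_L x)"
  by (induction xs) auto

lemma is_L_disjs [simp]: "is_L (disjs xs) = (\<forall>x\<in>set xs. is_L x)"
  by (induction xs) auto

lemma Imp_inject [simp]: "Imp a b = Imp c d \<longleftrightarrow> a = c \<and> b = d"
  by (auto simp: Imp_def)

lemma Imp_neq_Neg_Atom [simp]: "Imp a b \<noteq> Neg (Atom x)" "Neg (Atom x) \<noteq> Imp a b"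
  by (auto simp: Imp_def)


section \<open>Derived rules of LCA\<close>

context
  fixes rew pun :: "'g \<Rightarrow> 'a"
begin

lemma LCA_tautology: "is_L q \<Longrightarrow> (\<And>v. pc_eval v q) \<Longrightarrow> LCA rew pun q"
  by (rule PC) (auto simp: tautology_def)

lemma LCA_taut_consequence:
  assumes "\<forall>p\<in>set ps. LCA rew pun p" and "is_L q"
    and "\<And>v. \<forall>p\<in>set ps. pc_eval v p \<Longrightarrow> pc_eval v q"
  shows "LCA rew pun q"
proof -
  have "LCA rew pun (conjs ps)"
    using assms(1)
  proof (induction ps)
    case Nil
    then show ?case by (intro LCA_tautology) auto
  next
    case (Cons p ps)
    then have p: "LCA rew pun p" and ps: "LCA rew pun (conjs ps)" by auto
    have "LCA rew pun (Imp p (Imp (conjs ps) (conjs (p # ps))))"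
      using LCA_is_L[OF p] LCA_is_L[OF ps] by (intro LCA_tautology) auto
    then show ?case using p ps by (blast intro: MP)
  qed
  moreover have "LCA rew pun (Imp (conjs ps) q)"
    using LCA_is_L[OF calculation] assms(2,3) by (intro LCA_tautology) auto
  ultimately show ?thesis by (blast intro: MP)
qed

lemma LCA_taut_consequence1:
  "LCA rew pun p \<Longrightarrow> is_L q \<Longrightarrow> (\<And>v. pc_eval v p \<Longrightarrow> pc_eval v q) \<Longrightarrow> LCA rew pun q"
  by (rule LCA_taut_consequence[of "[p]"]) auto

lemma LCA_taut_consequence2:
  "LCA rew pun p1 \<Longrightarrow> LCA rew pun p2 \<Longrightarrow> is_L q \<Longrightarrow>
    (\<And>v. pc_eval v p1 \<Longrightarrow> pc_eval v p2 \<Longrightarrow> pc_eval v q) \<Longrightarrow> LCA rew pun q"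
  by (rule LCA_taut_consequence[of "[p1, p2]"]) auto

lemma LCA_taut_consequence3:
  "LCA rew pun p1 \<Longrightarrow> LCA rew pun p2 \<Longrightarrow> LCA rew pun p3 \<Longrightarrow> is_L q \<Longrightarrow>
    (\<And>v. pc_eval v p1 \<Longrightarrow> pc_eval v p2 \<Longrightarrow> pc_eval v p3 \<Longrightarrow> pc_eval v q) \<Longrightarrow> LCA rew pun q"
  by (rule LCA_taut_consequence[of "[p1, p2, p3]"]) auto

lemma LCA_Box_conjs:
  "LCA rew pun (Imp (conjs xs) q) \<Longrightarrow> LCA rew pun (Imp (conjs (map (Box i) xs)) (Box i q))"
proof (induction xs arbitrary: q)
  case Nil
  then have "LCA rew pun q"
    by (rule LCA_taut_consequence1) (use LCA_is_L[OF Nil] in auto)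
  then have "LCA rew pun (Box i q)" by (rule R1)
  then show ?case by (rule LCA_taut_consequence1) (use LCA_is_L[OF Nil] in auto)
next
  case (Cons x xs)
  have L: "is_L x" "\<forall>y\<in>set xs. is_L y" "is_L q" using LCA_is_L[OF Cons.prems] by auto
  have "LCA rew pun (Imp (conjs xs) (Imp x q))"
    by (rule LCA_taut_consequence1[OF Cons.prems]) (use L in auto)
  then have "LCA rew pun (Imp (conjs (map (Box i) xs)) (Box i (Imp x q)))" by (rule Cons.IH)
  moreover have "LCA rew pun (Imp (Conj (Box i x) (Box i (Imp x q))) (Box i q))"
    using L by (intro A1) auto
  ultimately show ?case by (rule LCA_taut_consequence2) (use L in auto)
qed

lemma LCA_Mod_Bot: "LCA rew pun (Mod k i Bot)"
  unfolding Bot_def by (intro R2 LCA_tautology) auto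

lemma LCA_Mod_antimono:
  assumes pq: "LCA rew pun (Imp p q)"
  shows "LCA rew pun (Imp (Mod k i q) (Mod k i p))"
proof -
  have L: "is_L p" "is_L q" using LCA_is_L[OF pq] by auto
  \<comment> \<open>(A2) for \<open>q\<close> and \<open>q \<and> p\<close>; by (R3), \<open>\<not> q \<and> (q \<and> p)\<close> may be replaced by Bot
    and \<open>q \<and> p\<close> by \<open>p\<close>\<close>
  have 1: "LCA rew pun (Imp (Conj (Mod k i q) (Mod k i (Conj (Neg q) (Conj q p)))) (Mod k i (Conj q p)))"
    using L by (intro A2) auto
  have "LCA rew pun (Iff Bot (Conj (Neg q) (Conj q p)))"
    using L by (intro LCA_tautology) auto
  then have "LCA rew pun (Iff (Mod k i Bot) (Mod k i (Conj (Neg q) (Conj q p))))" by (rule R3)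
  then have 2: "LCA rew pun (Mod k i (Conj (Neg q) (Conj q p)))"
    by (rule LCA_taut_consequence2[OF LCA_Mod_Bot]) (use L in auto)
  have "LCA rew pun (Iff (Conj q p) p)"
    by (rule LCA_taut_consequence1[OF pq]) (use L in auto)
  then have 3: "LCA rew pun (Iff (Mod k i (Conj q p)) (Mod k i p))" by (rule R3)
  show ?thesis
    by (rule LCA_taut_consequence3[OF 1 2 3]) (use L in auto)
qed

lemma LCA_Mod_Or:
  assumes "is_L p" "is_L q"
  shows "LCA rew pun (Imp (Conj (Mod k i p) (Mod k i q)) (Mod k i (Or p q)))"
proof -
  have "LCA rew pun (Imp (Conj (Mod k i p) (Mod k i (Conj (Neg p) (Or p q)))) (Mod k i (Or p q)))"
    using assms by (intro A2) auto
  moreover have "LCA rew pun (Imp (Conj (Neg p) (Or p q)) q)"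
    using assms by (intro LCA_tautology) auto
  then have "LCA rew pun (Imp (Mod k i q) (Mod k i (Conj (Neg p) (Or p q))))"
    by (rule LCA_Mod_antimono)
  ultimately show ?thesis by (rule LCA_taut_consequence2) (use assms in auto)
qed

lemma LCA_Mod_disjs:
  "\<forall>q\<in>set qs. is_L q \<Longrightarrow> LCA rew pun (Imp (conjs (map (Mod k i) qs)) (Mod k i (disjs qs)))"
proof (induction qs)
  case Nil
  show ?case by (rule LCA_taut_consequence1[OF LCA_Mod_Bot]) auto
next
  case (Cons q qs)
  then have "LCA rew pun (Imp (conjs (map (Mod k i) qs)) (Mod k i (disjs qs)))"
    and "LCA rew pun (Imp (Conj (Mod k i q) (Mod k i (disjs qs))) (Mod k i (Or q (disjs qs))))"
    by (auto intro: LCA_Mod_Or)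
  then show ?case by (rule LCA_taut_consequence2) (use Cons.prems in auto)
qed

lemma LCA_Mod_of_disjs:
  assumes "LCA rew pun (Imp p (disjs qs))"
  shows "LCA rew pun (Imp (conjs (map (Mod k i) qs)) (Mod k i p))"
proof -
  have L: "is_L p" "\<forall>q\<in>set qs. is_L q" using LCA_is_L[OF assms] by auto
  have "LCA rew pun (Imp (Mod k i (disjs qs)) (Mod k i p))"
    using assms by (rule LCA_Mod_antimono)
  moreover have "LCA rew pun (Imp (conjs (map (Mod k i) qs)) (Mod k i (disjs qs)))"
    using L(2) by (rule LCA_Mod_disjs)
  ultimately show ?thesis by (rule LCA_taut_consequence2) (use L in auto)
qed

lemma LCA_conjs_map:
  "\<forall>y\<in>set ys. \<exists>g\<in>G. LCA rew pun (Imp g (f y)) \<Longrightarrow>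
    \<exists>gs. set gs \<subseteq> G \<and> LCA rew pun (Imp (conjs gs) (conjs (map f ys)))"
proof (induction ys)
  case Nil
  have "LCA rew pun (Imp (conjs []) (conjs (map f [])))" by (intro LCA_tautology) auto
  then show ?case by (intro exI[of _ "[]"]) simp
next
  case (Cons y ys)
  then obtain g gs where g: "g \<in> G" "LCA rew pun (Imp g (f y))"
    and gs: "set gs \<subseteq> G" "LCA rew pun (Imp (conjs gs) (conjs (map f ys)))"
    by auto
  have "LCA rew pun (Imp (conjs (g # gs)) (conjs (map f (y # ys))))"
    by (rule LCA_taut_consequence2[OF g(2) gs(2)]) (use LCA_is_L[OF g(2)] LCA_is_L[OF gs(2)] in auto)
  then show ?case using g gs by (intro exI[of _ "g # gs"]) auto
qed

end


section \<open>Soundness\<close>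

lemma sat_is_L0: "is_L0 a \<Longrightarrow> sat rew pun U S a = sat0 S a"
  by (induction a) auto

lemma sat_Imp [simp]: "sat rew pun U S (Imp a b) = (sat rew pun U S a \<longrightarrow> sat rew pun U S b)"
  by (simp add: Imp_def)

lemma sat_Iff [simp]: "sat rew pun U S (Iff a b) = (sat rew pun U S a \<longleftrightarrow> sat rew pun U S b)"
  by (auto simp: Iff_def)

lemma sat0_Imp [simp]: "sat0 S (Imp a b) = (sat0 S a \<longrightarrow> sat0 S b)"
  by (simp add: Imp_def)

lemma pc_eval_sat: "pc_eval (sat rew pun U S) p = sat rew pun U S p"
  by (induction p) auto

lemma valid_Iff_Mod:
  fixes rew pun :: "'g \<Rightarrow> 'a"
  assumes "valid rew pun (Iff p q)"
  shows "valid rew pun (Iff (Mod k i p) (Mod k i q))"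
  unfolding valid_def
proof (intro allI impI)
  fix U :: "('a, 'g) state set" and S assume "U \<subseteq> states" "S \<in> U"
  then have "\<And>S'. S' \<in> U \<Longrightarrow> sat rew pun U S' p = sat rew pun U S' q"
    using assms unfolding valid_def by auto
  then show "sat rew pun U S (Iff (Mod k i p) (Mod k i q))"
    by (cases k) (simp_all cong: ball_cong)
qed

theorem LCA_sound: "LCA rew pun p \<Longrightarrow> valid rew pun p"
proof (induction rule: LCA.induct)
  case (PC p)
  then show ?case unfolding valid_def tautology_def by (metis pc_eval_sat)
next
  case (A2 p q k i)
  then show ?case unfolding valid_def by (cases k) auto
next
  case (R2 p k i)
  then show ?case unfolding valid_def by (cases k) auto
next
  case (R3 p q k i)
  from R3.IH show ?case by (rule valid_Iff_Mod)
qed (fastforce simp: valid_def sat_is_L0 relE_def relA_def relR_def Des_def Und_def)+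


section \<open>Consistent sets\<close>

context
  fixes rew pun :: "'g \<Rightarrow> 'a"
begin

definition consistent :: "('a, 'g) fm set \<Rightarrow> bool" where
  "consistent X \<longleftrightarrow> \<not> (\<exists>xs. set xs \<subseteq> X \<and> LCA rew pun (Neg (conjs xs)))"

lemma consistent_subset: "consistent X \<Longrightarrow> Y \<subseteq> X \<Longrightarrow> consistent Y"
  unfolding consistent_def by blast

lemma consistent_refute:
  assumes "consistent X" "set xs \<subseteq> X" "\<forall>x\<in>set xs. is_L x"
    and "\<And>v. \<forall>x\<in>set xs. pc_eval v x \<Longrightarrow> False"
  shows False
proof -
  have "LCA rew pun (Neg (conjs xs))" using assms(3,4) by (intro LCA_tautology) auto
  then show False using assms(1,2) unfolding consistent_def by blast
qed

lemma consistent_Neg_derivable: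
  assumes "consistent X" "set xs \<subseteq> X" "LCA rew pun (Imp (conjs xs) c)"
  shows "Neg c \<notin> X"
proof
  assume "Neg c \<in> X"
  have "LCA rew pun (Neg (conjs (Neg c # xs)))"
    by (rule LCA_taut_consequence1[OF assms(3)]) (use LCA_is_L[OF assms(3)] in auto)
  moreover have "set (Neg c # xs) \<subseteq> X" using assms(2) \<open>Neg c \<in> X\<close> by auto
  ultimately show False using assms(1) unfolding consistent_def by blast
qed

lemma consistent_insert: "consistent X \<Longrightarrow> consistent (insert c X) \<or> consistent (insert (Neg c) X)"
proof (rule ccontr)
  assume X: "consistent X" and "\<not> (consistent (insert c X) \<or> consistent (insert (Neg c) X))"
  then obtain xs ys where xs: "set xs \<subseteq> insert c X" "LCA rew pun (Neg (conjs xs))"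
    and ys: "set ys \<subseteq> insert (Neg c) X" "LCA rew pun (Neg (conjs ys))"
    unfolding consistent_def by blast
  define zs where "zs = filter (\<lambda>x. x \<noteq> c) xs @ filter (\<lambda>x. x \<noteq> Neg c) ys"
  have "LCA rew pun (Neg (conjs zs))"
  proof (rule LCA_taut_consequence2[OF xs(2) ys(2)])
    show "is_L (Neg (conjs zs))"
      using LCA_is_L[OF xs(2)] LCA_is_L[OF ys(2)] by (auto simp: zs_def)
  next
    fix v assume xs_v: "pc_eval v (Neg (conjs xs))" and ys_v: "pc_eval v (Neg (conjs ys))"
    show "pc_eval v (Neg (conjs zs))"
    proof (cases "pc_eval v c")
      case True
      then show ?thesis using xs_v by (auto simp: zs_def)
    next
      case False
      then show ?thesis using ys_v by (auto simp: zs_def)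
    qed
  qed
  moreover have "set zs \<subseteq> X" using xs ys by (auto simp: zs_def)
  ultimately show False using X unfolding consistent_def by blast
qed

lemma lindenbaum_finite:
  "finite F \<Longrightarrow> consistent X \<Longrightarrow> \<exists>w\<subseteq>F. consistent (X \<union> w \<union> Neg ` (F - w))"
proof (induction F rule: finite_induct)
  case empty
  then show ?case by auto
next
  case (insert x F)
  then obtain w where w: "w \<subseteq> F" "consistent (X \<union> w \<union> Neg ` (F - w))" by auto
  from consistent_insert[OF w(2)] show ?case
  proof
    assume "consistent (insert x (X \<union> w \<union> Neg ` (F - w)))"
    moreover have "X \<union> insert x w \<union> Neg ` (insert x F - insert x w)
        \<subseteq> insert x (X \<union> w \<union> Neg ` (F - w))" by auto
    ultimately show ?thesis using w(1) by (intro exI[of _ "insert x w"]) (auto intro: consistent_subset)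
  next
    assume "consistent (insert (Neg x) (X \<union> w \<union> Neg ` (F - w)))"
    moreover have "X \<union> w \<union> Neg ` (insert x F - w) \<subseteq> insert (Neg x) (X \<union> w \<union> Neg ` (F - w))"
      by auto
    ultimately show ?thesis using w(1) by (intro exI[of _ w]) (auto intro: consistent_subset)
  qed
qed

end


section \<open>The canonical countermodel\<close>

fun subformulas :: "('a, 'g) fm \<Rightarrow> ('a, 'g) fm set" where
  "subformulas (Atom p) = {Atom p}"
| "subformulas (Neg a) = insert (Neg a) (subformulas a)"
| "subformulas (Conj a b) = insert (Conj a b) (subformulas a \<union> subformulas b)"
| "subformulas (Tri i a) = insert (Tri i a) (subformulas a)"
| "subformulas (Box i a) = insert (Box i a) (subformulas a)"
| "subformulas (Mod k i a) = insert (Mod k i a) (subformulas a)"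

lemma subformulas_refl: "x \<in> subformulas x"
  by (cases x) auto

lemma subformulas_trans: "y \<in> subformulas x \<Longrightarrow> subformulas y \<subseteq> subformulas x"
  by (induction x) auto

lemma finite_subformulas: "finite (subformulas x)"
  by (induction x) auto

lemma subformulas_is_L0: "is_L0 x \<Longrightarrow> y \<in> subformulas x \<Longrightarrow> is_L0 y"
  by (induction x) auto

lemma subformulas_is_L: "is_L x \<Longrightarrow> y \<in> subformulas x \<Longrightarrow> is_L y"
  by (induction x) (auto dest: subformulas_is_L0 is_L0_imp_is_L)

definition relGoal :: "('g \<Rightarrow> 'a) \<Rightarrow> 'g \<Rightarrow> ('a, 'g) state \<Rightarrow> ('a, 'g) state \<Rightarrow> bool" where
  "relGoal r i S S' \<longleftrightarrow> (\<exists>a. is_L0 a \<and> Imp a (Atom (r i)) \<in> fst S i \<and> sat0 S' a)"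

lemma relA_eq_relGoal: "relA rew = relGoal rew" and relR_eq_relGoal: "relR pun = relGoal pun"
  by (auto simp: fun_eq_iff relA_def relR_def relGoal_def Des_def Und_def)

lemma split_subset_Un_insert_Neg:
  assumes "set xs \<subseteq> B \<union> insert p (Neg ` Q)"
  obtains bs qs where "set bs \<subseteq> B" "set qs \<subseteq> Q" "set xs \<subseteq> set bs \<union> insert p (Neg ` set qs)"
proof -
  obtain C where C: "C \<subseteq> Q" "finite C" "set xs \<inter> Neg ` Q = Neg ` C"
    using finite_subset_image[of "set xs \<inter> Neg ` Q" Neg Q] by auto
  obtain qs where qs: "set qs = C" using finite_list[OF C(2)] by blast
  have "set xs \<subseteq> set (filter (\<lambda>x. x \<in> B) xs) \<union> insert p (Neg ` set qs)"
    using assms C(3) qs by auto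
  then show ?thesis using C(1) qs by (intro that[of "filter (\<lambda>x. x \<in> B) xs" qs]) auto
qed

locale countermodel =
  fixes rew pun :: "'g::finite \<Rightarrow> 'a" and \<phi> :: "('a, 'g) fm"
  assumes rew_pun_disjoint: "range rew \<inter> range pun = {}"
    and is_L_\<phi>: "is_L \<phi>"
    and infinite_atoms: "infinite (UNIV :: 'a set)"
begin

definition Cl :: "('a, 'g) fm set" where
  "Cl = subformulas \<phi> \<union> range (\<lambda>i. Atom (rew i)) \<union> range (\<lambda>i. Atom (pun i))"

lemma finite_Cl: "finite Cl"
  unfolding Cl_def by (auto simp: finite_subformulas)

lemma \<phi>_in_Cl: "\<phi> \<in> Cl"
  unfolding Cl_def using subformulas_refl by auto

lemma Atom_rew_pun_in_Cl [simp]: "Atom (rew i) \<in> Cl" "Atom (pun i) \<in> Cl"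
  unfolding Cl_def by auto

lemma Cl_subformulas: "x \<in> Cl \<Longrightarrow> y \<in> subformulas x \<Longrightarrow> y \<in> Cl"
  unfolding Cl_def using subformulas_trans by auto

lemma Cl_sub:
  "Neg a \<in> Cl \<Longrightarrow> a \<in> Cl" "Conj a b \<in> Cl \<Longrightarrow> a \<in> Cl" "Conj a b \<in> Cl \<Longrightarrow> b \<in> Cl"
  "Tri i a \<in> Cl \<Longrightarrow> a \<in> Cl" "Box i a \<in> Cl \<Longrightarrow> a \<in> Cl" "Mod k i a \<in> Cl \<Longrightarrow> a \<in> Cl"
  by (erule Cl_subformulas, simp add: subformulas_refl)+

lemma Cl_Imp: "Imp a b \<in> Cl \<Longrightarrow> a \<in> Cl" "Imp a b \<in> Cl \<Longrightarrow> b \<in> Cl"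
  unfolding Imp_def using Cl_sub by blast+

lemma Cl_is_L: "x \<in> Cl \<Longrightarrow> is_L x"
  unfolding Cl_def using subformulas_is_L[OF is_L_\<phi>] by auto

lemma Cl_Tri_is_L0: "Tri i a \<in> Cl \<Longrightarrow> is_L0 a"
  using Cl_is_L by fastforce

definition literals :: "('a, 'g) fm set \<Rightarrow> ('a, 'g) fm set" where
  "literals w = w \<union> Neg ` (Cl - w)"

definition Worlds :: "('a, 'g) fm set set" where
  "Worlds = {w. w \<subseteq> Cl \<and> consistent rew pun (literals w)}"

definition compatible :: "('a, 'g) fm set \<Rightarrow> ('a, 'g) fm set \<Rightarrow> bool" where
  "compatible X w \<longleftrightarrow> consistent rew pun (X \<union> literals w)"

definition lit :: "('a, 'g) fm set \<Rightarrow> ('a, 'g) fm \<Rightarrow> ('a, 'g) fm" where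
  "lit w c = (if c \<in> w then c else Neg c)"

lemma Worlds_subset_Cl: "w \<in> Worlds \<Longrightarrow> x \<in> w \<Longrightarrow> x \<in> Cl"
  unfolding Worlds_def by auto

lemma world_Tri_Imp:
  assumes "w \<in> Worlds" "Tri i (Imp a b) \<in> w"
  shows "a \<in> Cl" "is_L0 a"
proof -
  have "Tri i (Imp a b) \<in> Cl" using assms by (rule Worlds_subset_Cl)
  show "a \<in> Cl" using Cl_Imp(1)[OF Cl_sub(4)[OF \<open>Tri i (Imp a b) \<in> Cl\<close>]] .
  show "is_L0 a" using Cl_Tri_is_L0[OF \<open>Tri i (Imp a b) \<in> Cl\<close>] by simp
qed

lemma finite_Worlds: "finite Worlds"
  by (rule finite_subset[of _ "Pow Cl"]) (auto simp: Worlds_def finite_Cl)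

lemma compatible_world_exists: "consistent rew pun X \<Longrightarrow> \<exists>w\<in>Worlds. compatible X w"
proof -
  assume "consistent rew pun X"
  from lindenbaum_finite[OF finite_Cl this]
  obtain w where w: "w \<subseteq> Cl" "consistent rew pun (X \<union> w \<union> Neg ` (Cl - w))"
    by blast
  then have "compatible X w" by (simp add: compatible_def literals_def Un_assoc)
  moreover have "consistent rew pun (literals w)"
    by (rule consistent_subset[OF w(2)]) (auto simp: literals_def)
  then have "w \<in> Worlds" using w(1) unfolding Worlds_def by blast
  ultimately show ?thesis by blast
qed

lemma compatible_refute:
  assumes "compatible X w" "set cs \<subseteq> Cl" "set xs \<subseteq> X" "\<forall>x\<in>set xs. is_L x"
    and "\<And>v. \<forall>x\<in>set xs. pc_eval v x \<Longrightarrow> \<forall>c\<in>set cs. pc_eval v (lit w c) \<Longrightarrow> False"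
  shows False
proof (rule consistent_refute[of rew pun _ "xs @ map (lit w) cs"])
  show "consistent rew pun (X \<union> literals w)" using assms(1) unfolding compatible_def .
  show "set (xs @ map (lit w) cs) \<subseteq> X \<union> literals w"
    using assms(2,3) by (auto simp: lit_def literals_def)
  show "\<forall>x\<in>set (xs @ map (lit w) cs). is_L x"
    using assms(2,4) Cl_is_L by (auto simp: lit_def)
next
  fix v assume "\<forall>x\<in>set (xs @ map (lit w) cs). pc_eval v x"
  then show False using assms(5)[of v] by auto
qed

lemma world_refute:
  "w \<in> Worlds \<Longrightarrow> set cs \<subseteq> Cl \<Longrightarrow> (\<And>v. \<forall>c\<in>set cs. pc_eval v (lit w c) \<Longrightarrow> False) \<Longrightarrow> False"
  by (rule compatible_refute[of "{}" w cs "[]"]) (auto simp: Worlds_def compatible_def)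

lemma world_Neg:
  assumes "w \<in> Worlds" "Neg a \<in> Cl"
  shows "Neg a \<in> w \<longleftrightarrow> a \<notin> w"
proof -
  have "a \<in> Cl" using assms(2) by (rule Cl_sub)
  show ?thesis
    by (rule ccontr, rule world_refute[OF assms(1), of "[Neg a, a]"])
      (use assms(2) \<open>a \<in> Cl\<close> in \<open>auto simp: lit_def\<close>)
qed

lemma world_Conj:
  assumes "w \<in> Worlds" "Conj a b \<in> Cl"
  shows "Conj a b \<in> w \<longleftrightarrow> a \<in> w \<and> b \<in> w"
proof -
  have "a \<in> Cl" "b \<in> Cl" using assms(2) by (rule Cl_sub)+
  show ?thesis
    by (rule ccontr, rule world_refute[OF assms(1), of "[Conj a b, a, b]"])
      (use assms(2) \<open>a \<in> Cl\<close> \<open>b \<in> Cl\<close> in \<open>auto simp: lit_def\<close>)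
qed

lemma compatible_mem: "compatible X w \<Longrightarrow> x \<in> X \<Longrightarrow> x \<in> Cl \<Longrightarrow> x \<in> w"
  by (rule ccontr, rule compatible_refute[of X w "[x]" "[x]"]) (auto simp: lit_def dest: Cl_is_L)

lemma compatible_not_mem: "compatible X w \<Longrightarrow> Neg x \<in> X \<Longrightarrow> x \<in> Cl \<Longrightarrow> x \<notin> w"
  by (rule notI, rule compatible_refute[of X w "[x]" "[Neg x]"]) (auto simp: lit_def dest: Cl_is_L)

lemma compatible_Imp:
  "compatible X w \<Longrightarrow> Imp x y \<in> X \<Longrightarrow> x \<in> Cl \<Longrightarrow> y \<in> Cl \<Longrightarrow> x \<in> w \<Longrightarrow> y \<in> w"
  by (rule ccontr, rule compatible_refute[of X w "[x, y]" "[Imp x y]"])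
    (auto simp: lit_def dest: Cl_is_L)

lemma world_mem_derivable: "w \<in> Worlds \<Longrightarrow> x \<in> w \<Longrightarrow> \<exists>g\<in>w. LCA rew pun (Imp g x)"
  by (rule bexI[of _ x], rule LCA_tautology) (auto dest: Worlds_subset_Cl Cl_is_L)

lemma world_not_derives_nonmember:
  assumes "w \<in> Worlds" "c \<in> Cl" "c \<notin> w" "set gs \<subseteq> w"
  shows "\<not> LCA rew pun (Imp (conjs gs) c)"
proof
  assume "LCA rew pun (Imp (conjs gs) c)"
  then have "Neg c \<notin> literals w"
    using assms(1,4) by (intro consistent_Neg_derivable) (auto simp: Worlds_def literals_def)
  then show False using assms(2,3) by (auto simp: literals_def)
qed

text \<open>Each triple pairs an ideal modality with its real variant and with the atoms
  (rew_i or pun_i) through which the state semantics interprets both.\<close>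

definition kinds :: "(mkind \<times> mkind \<times> ('g \<Rightarrow> 'a)) set" where
  "kinds = {(MA, MAreal, rew), (MR, MRreal, pun)}"

lemma kinds_LCA:
  assumes "(k, kr, r) \<in> kinds"
  shows "is_L0 a \<Longrightarrow> LCA rew pun (Imp (Tri i (Imp a (Atom (r i)))) (Mod k i a))"
    and "is_L p \<Longrightarrow> LCA rew pun (Imp (Mod k i p) (Mod kr i p))"
    and "is_L p \<Longrightarrow> LCA rew pun (Imp (Box i p) (Mod kr i (Neg p)))"
    and "is_L p \<Longrightarrow> LCA rew pun (Imp (Mod kr i p) (Box i (Imp p (Atom (r i)))))"
  using assms unfolding kinds_def by (auto intro: LCA.intros)

lemma kinds_unique:
  "(k, kr, r) \<in> kinds \<Longrightarrow> (k', kr', r') \<in> kinds \<Longrightarrow> r i = r' j \<Longrightarrow> k = k' \<and> kr = kr' \<and> r = r'"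
  using rew_pun_disjoint unfolding kinds_def by auto

lemma kinds_cover: "\<exists>k kr r. (k, kr, r) \<in> kinds \<and> (m = k \<or> m = kr)"
  unfolding kinds_def by (cases m) auto

lemma sat_Mod_kinds:
  assumes "(k, kr, r) \<in> kinds"
  shows "sat rew pun U S (Mod k i a) \<longleftrightarrow> (\<forall>S'\<in>U. sat rew pun U S' a \<longrightarrow> relGoal r i S S')"
    and "sat rew pun U S (Mod kr i a) \<longleftrightarrow>
      (\<forall>S'\<in>U. sat rew pun U S' a \<and> relE i S S' \<longrightarrow> relGoal r i S S')"
  using assms by (auto simp: kinds_def relA_eq_relGoal relR_eq_relGoal)

definition Erel :: "'g \<Rightarrow> ('a, 'g) fm set \<Rightarrow> ('a, 'g) fm set \<Rightarrow> bool" where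
  "Erel i w u \<longleftrightarrow> (\<forall>x. Box i x \<in> w \<longrightarrow> x \<in> u) \<and>
     (\<forall>k kr r p. (k, kr, r) \<in> kinds \<longrightarrow> (Mod k i p \<in> w \<or> Mod kr i p \<in> w) \<longrightarrow>
        p \<in> u \<longrightarrow> Atom (r i) \<in> u) \<and>
     (\<forall>a. Tri i a \<in> w \<longrightarrow> a \<in> u)"

definition forced :: "'g \<Rightarrow> ('a, 'g) fm set \<Rightarrow> ('a, 'g) fm set" where
  "forced i w = {x. Box i x \<in> w} \<union>
     {Imp p (Atom (r i)) | p k kr r. (k, kr, r) \<in> kinds \<and> (Mod k i p \<in> w \<or> Mod kr i p \<in> w)} \<union>
     {a. Tri i a \<in> w}"

definition goal_met :: "('g \<Rightarrow> 'a) \<Rightarrow> 'g \<Rightarrow> ('a, 'g) fm set \<Rightarrow> ('a, 'g) fm set \<Rightarrow> bool" where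
  "goal_met r i w u \<longleftrightarrow> (\<exists>a. Tri i (Imp a (Atom (r i))) \<in> w \<and> a \<in> u)"

lemma forced_is_L:
  assumes w: "w \<in> Worlds" and x: "x \<in> forced i w"
  shows "is_L x"
  using x unfolding forced_def
proof (elim UnE CollectE exE conjE)
  assume "Box i x \<in> w"
  then show ?thesis using Worlds_subset_Cl[OF w] Cl_sub(5) Cl_is_L by blast
next
  fix p k kr r assume "x = Imp p (Atom (r i))" "Mod k i p \<in> w \<or> Mod kr i p \<in> w"
  then have "is_L p" using Worlds_subset_Cl[OF w] Cl_sub(6) Cl_is_L by blast
  then show ?thesis using \<open>x = Imp p (Atom (r i))\<close> by simp
next
  assume "Tri i x \<in> w"
  then show ?thesis using Worlds_subset_Cl[OF w] Cl_Tri_is_L0 is_L0_imp_is_L by blast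
qed

lemma forced_Box_derivable:
  assumes w: "w \<in> Worlds" and x: "x \<in> forced i w"
  shows "\<exists>g\<in>w. LCA rew pun (Imp g (Box i x))"
proof -
  have "is_L x" using forced_is_L[OF w x] .
  from x consider (box) "Box i x \<in> w"
    | (Mod) p k kr r where "x = Imp p (Atom (r i))" "(k, kr, r) \<in> kinds" "Mod k i p \<in> w"
    | (Mod_real) p k kr r where "x = Imp p (Atom (r i))" "(k, kr, r) \<in> kinds" "Mod kr i p \<in> w"
    | (tri) "Tri i x \<in> w"
    unfolding forced_def by blast
  then show ?thesis
  proof cases
    case box
    then show ?thesis by (rule world_mem_derivable[OF w])
  next
    case Mod
    then have "is_L p" using \<open>is_L x\<close> by simp
    have "LCA rew pun (Imp (Mod k i p) (Box i x))"
      by (rule LCA_taut_consequence2[OF kinds_LCA(2,4)[OF Mod(2) \<open>is_L p\<close>]])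
        (use Mod(1) \<open>is_L p\<close> in auto)
    then show ?thesis using Mod(3) by blast
  next
    case Mod_real
    then have "is_L p" using \<open>is_L x\<close> by simp
    then show ?thesis using kinds_LCA(4)[OF Mod_real(2) \<open>is_L p\<close>, of i] Mod_real(1,3) by blast
  next
    case tri
    then have "is_L0 x" using Cl_Tri_is_L0 Worlds_subset_Cl[OF w] by blast
    then show ?thesis using tri A3[OF \<open>is_L0 x\<close>, of rew pun i] by blast
  qed
qed

lemma compatible_forced_Erel:
  assumes c: "compatible X u'" and sub: "forced i u \<subseteq> X" and u: "u \<in> Worlds"
  shows "Erel i u u'"
  unfolding Erel_def
proof (intro conjI allI impI)
  fix x assume "Box i x \<in> u"
  then show "x \<in> u'"
    using sub by (intro compatible_mem[OF c]) (auto simp: forced_def dest: Worlds_subset_Cl[OF u] Cl_sub)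
next
  fix k kr r p assume k: "(k, kr, r) \<in> kinds" and m: "Mod k i p \<in> u \<or> Mod kr i p \<in> u"
    and "p \<in> u'"
  have "Imp p (Atom (r i)) \<in> X" using sub k m unfolding forced_def by blast
  moreover have "p \<in> Cl" using m by (auto dest: Worlds_subset_Cl[OF u] Cl_sub)
  moreover have "Atom (r i) \<in> Cl" using k unfolding kinds_def by auto
  ultimately show "Atom (r i) \<in> u'" using compatible_Imp[OF c] \<open>p \<in> u'\<close> by blast
next
  fix a assume "Tri i a \<in> u"
  then show "a \<in> u'"
    using sub by (intro compatible_mem[OF c]) (auto simp: forced_def dest: Worlds_subset_Cl[OF u] Cl_sub)
qed

lemma Box_witness:
  assumes u: "u \<in> Worlds" and c: "Box i c \<in> Cl" "Box i c \<notin> u"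
  shows "\<exists>u'\<in>Worlds. Erel i u u' \<and> c \<notin> u'"
proof -
  have "c \<in> Cl" using c(1) by (rule Cl_sub)
  have "consistent rew pun (insert (Neg c) (forced i u))"
    unfolding consistent_def
  proof (rule notI, elim exE conjE)
    fix xs assume xs: "set xs \<subseteq> insert (Neg c) (forced i u)" "LCA rew pun (Neg (conjs xs))"
    define ys where "ys = filter (\<lambda>x. x \<noteq> Neg c) xs"
    have ys: "set ys \<subseteq> forced i u" using xs(1) by (auto simp: ys_def)
    have "LCA rew pun (Imp (conjs ys) c)"
      by (rule LCA_taut_consequence1[OF xs(2)])
        (use ys forced_is_L[OF u] Cl_is_L[OF \<open>c \<in> Cl\<close>] in \<open>auto simp: ys_def\<close>)
    then have 1: "LCA rew pun (Imp (conjs (map (Box i) ys)) (Box i c))" by (rule LCA_Box_conjs)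
    have "\<forall>y\<in>set ys. \<exists>g\<in>u. LCA rew pun (Imp g (Box i y))"
      using ys forced_Box_derivable[OF u] by blast
    from LCA_conjs_map[OF this]
    obtain gs where gs: "set gs \<subseteq> u" "LCA rew pun (Imp (conjs gs) (conjs (map (Box i) ys)))"
      by blast
    have "LCA rew pun (Imp (conjs gs) (Box i c))"
      by (rule LCA_taut_consequence2[OF gs(2) 1]) (use LCA_is_L[OF gs(2)] LCA_is_L[OF 1] in auto)
    then show False using world_not_derives_nonmember[OF u c(1,2) gs(1)] by blast
  qed
  from compatible_world_exists[OF this]
  obtain u' where u': "u' \<in> Worlds" "compatible (insert (Neg c) (forced i u)) u'"
    by blast
  have "Erel i u u'" by (rule compatible_forced_Erel[OF u'(2) _ u]) auto
  moreover have "c \<notin> u'" by (rule compatible_not_mem[OF u'(2)]) (auto simp: \<open>c \<in> Cl\<close>)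
  ultimately show ?thesis using u' by blast
qed

text \<open>A refutation of the witness set would give \<open>m p\<close> from u: \<open>m\<close> is antitone and turns
  disjunctions into conjunctions, and B_Mod, Q_Mod supply \<open>m\<close> of each disjunct.\<close>

lemma Mod_witness_consistent:
  assumes u: "u \<in> Worlds" and m: "Mod m i p \<in> Cl" "Mod m i p \<notin> u"
    and B_L: "B \<subseteq> Collect is_L"
    and B_Mod: "\<And>bs. set bs \<subseteq> B \<Longrightarrow>
      \<exists>gs. set gs \<subseteq> u \<and> LCA rew pun (Imp (conjs gs) (Mod m i (Neg (conjs bs))))"
    and Q_Cl: "Q \<subseteq> Cl" and Q_Mod: "\<forall>q\<in>Q. \<exists>g\<in>u. LCA rew pun (Imp g (Mod m i q))"
  shows "consistent rew pun (B \<union> insert p (Neg ` Q))"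
  unfolding consistent_def
proof (rule notI, elim exE conjE)
  fix xs assume xs: "set xs \<subseteq> B \<union> insert p (Neg ` Q)" "LCA rew pun (Neg (conjs xs))"
  from xs(1) obtain bs qs where bs: "set bs \<subseteq> B" and qs: "set qs \<subseteq> Q"
    and xs_sub: "set xs \<subseteq> set bs \<union> insert p (Neg ` set qs)"
    by (rule split_subset_Un_insert_Neg)
  have "p \<in> Cl" using m(1) by (rule Cl_sub)
  then have L: "is_L p" "\<forall>b\<in>set bs. is_L b" "\<forall>q\<in>set qs. is_L q"
    using bs B_L qs Q_Cl Cl_is_L by auto
  have "LCA rew pun (Imp p (disjs (Neg (conjs bs) # qs)))"
    by (rule LCA_taut_consequence1[OF xs(2)]) (use xs_sub L in auto)
  then have 1: "LCA rew pun (Imp (conjs (map (Mod m i) (Neg (conjs bs) # qs))) (Mod m i p))"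
    by (rule LCA_Mod_of_disjs)
  obtain gs1 where gs1: "set gs1 \<subseteq> u" "LCA rew pun (Imp (conjs gs1) (Mod m i (Neg (conjs bs))))"
    using B_Mod[OF bs] by blast
  have "\<forall>q\<in>set qs. \<exists>g\<in>u. LCA rew pun (Imp g (Mod m i q))" using Q_Mod qs by blast
  from LCA_conjs_map[OF this]
  obtain gs2 where gs2: "set gs2 \<subseteq> u" "LCA rew pun (Imp (conjs gs2) (conjs (map (Mod m i) qs)))"
    by blast
  have "LCA rew pun (Imp (conjs (gs1 @ gs2)) (Mod m i p))"
    by (rule LCA_taut_consequence3[OF gs1(2) gs2(2) 1])
      (use LCA_is_L[OF gs1(2)] LCA_is_L[OF gs2(2)] LCA_is_L[OF 1] in auto)
  moreover have "set (gs1 @ gs2) \<subseteq> u" using gs1(1) gs2(1) by simp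
  ultimately show False using world_not_derives_nonmember[OF u m] by blast
qed

lemma Mod_witness:
  assumes k: "(k, kr, r) \<in> kinds" and u: "u \<in> Worlds" and m: "Mod k i p \<in> Cl" "Mod k i p \<notin> u"
  shows "\<exists>u'\<in>Worlds. p \<in> u' \<and> \<not> goal_met r i u u' \<and> (\<forall>q. Mod k i q \<in> u \<longrightarrow> q \<notin> u')"
proof -
  define Q where "Q = {a. Tri i (Imp a (Atom (r i))) \<in> u} \<union> {q. Mod k i q \<in> u}"
  have Q_Cl: "Q \<subseteq> Cl"
    unfolding Q_def by (auto dest: world_Tri_Imp(1)[OF u] Worlds_subset_Cl[OF u] Cl_sub(6))
  have Q_Mod: "\<forall>q\<in>Q. \<exists>g\<in>u. LCA rew pun (Imp g (Mod k i q))"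
  proof
    fix q assume "q \<in> Q"
    then consider (goal) "Tri i (Imp q (Atom (r i))) \<in> u" | (Mod) "Mod k i q \<in> u"
      unfolding Q_def by blast
    then show "\<exists>g\<in>u. LCA rew pun (Imp g (Mod k i q))"
    proof cases
      case goal
      then show ?thesis using kinds_LCA(1)[OF k world_Tri_Imp(2)[OF u goal], of i] by blast
    next
      case Mod
      then show ?thesis by (rule world_mem_derivable[OF u])
    qed
  qed
  have B_Mod: "\<exists>gs. set gs \<subseteq> u \<and> LCA rew pun (Imp (conjs gs) (Mod k i (Neg (conjs bs))))"
    if "set bs \<subseteq> {}" for bs
  proof -
    have "LCA rew pun (Imp (conjs []) (Mod k i (Neg (conjs []))))"
      by (rule LCA_taut_consequence1[OF LCA_Mod_Bot]) (simp_all add: Bot_def)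
    then show ?thesis using that by (intro exI[of _ "[]"]) simp
  qed
  from compatible_world_exists[OF Mod_witness_consistent[OF u m empty_subsetI B_Mod Q_Cl Q_Mod]]
  obtain u' where u': "u' \<in> Worlds" "compatible (insert p (Neg ` Q)) u'"
    by auto
  have "p \<in> u'" by (rule compatible_mem[OF u'(2)]) (use Cl_sub(6)[OF m(1)] in auto)
  moreover have "q \<notin> u'" if "q \<in> Q" for q
    using compatible_not_mem[OF u'(2)] that Q_Cl by blast
  ultimately show ?thesis using u'(1) unfolding goal_met_def Q_def by blast
qed

lemma forced_Mod_real_derivable:
  assumes k: "(k, kr, r) \<in> kinds" and u: "u \<in> Worlds" and bs: "set bs \<subseteq> forced i u"
  shows "\<exists>gs. set gs \<subseteq> u \<and> LCA rew pun (Imp (conjs gs) (Mod kr i (Neg (conjs bs))))"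
proof -
  have L: "\<forall>b\<in>set bs. is_L b" using bs forced_is_L[OF u] by auto
  have "\<forall>b\<in>set bs. \<exists>g\<in>u. LCA rew pun (Imp g (Box i b))" using bs forced_Box_derivable[OF u] by blast
  from LCA_conjs_map[OF this]
  obtain gs where gs: "set gs \<subseteq> u" "LCA rew pun (Imp (conjs gs) (conjs (map (Box i) bs)))"
    by blast
  have "LCA rew pun (Imp (conjs bs) (conjs bs))" by (rule LCA_tautology) (use L in auto)
  then have "LCA rew pun (Imp (conjs (map (Box i) bs)) (Box i (conjs bs)))" by (rule LCA_Box_conjs)
  moreover have "LCA rew pun (Imp (Box i (conjs bs)) (Mod kr i (Neg (conjs bs))))"
    using kinds_LCA(3)[OF k] L by auto
  ultimately have "LCA rew pun (Imp (conjs gs) (Mod kr i (Neg (conjs bs))))"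
    by (rule LCA_taut_consequence3[OF gs(2)]) (use LCA_is_L[OF gs(2)] L in auto)
  then show ?thesis using gs(1) by blast
qed

lemma Mod_real_witness:
  assumes k: "(k, kr, r) \<in> kinds" and u: "u \<in> Worlds" and m: "Mod kr i p \<in> Cl" "Mod kr i p \<notin> u"
  shows "\<exists>u'\<in>Worlds. Erel i u u' \<and> p \<in> u' \<and> \<not> goal_met r i u u' \<and>
    (\<forall>q. Mod k i q \<in> u \<longrightarrow> q \<notin> u') \<and> (\<forall>q. Mod kr i q \<in> u \<longrightarrow> q \<notin> u')"
proof -
  define Q where
    "Q = {a. Tri i (Imp a (Atom (r i))) \<in> u} \<union> {q. Mod k i q \<in> u} \<union> {q. Mod kr i q \<in> u}"
  have Q_Cl: "Q \<subseteq> Cl"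
    unfolding Q_def by (auto dest: world_Tri_Imp(1)[OF u] Worlds_subset_Cl[OF u] Cl_sub(6))
  have Q_Mod: "\<forall>q\<in>Q. \<exists>g\<in>u. LCA rew pun (Imp g (Mod kr i q))"
  proof
    fix q assume "q \<in> Q"
    then have "is_L q" using Q_Cl Cl_is_L by blast
    from \<open>q \<in> Q\<close> consider (goal) "Tri i (Imp q (Atom (r i))) \<in> u" | (Mod) "Mod k i q \<in> u"
      | (Mod_real) "Mod kr i q \<in> u"
      unfolding Q_def by blast
    then show "\<exists>g\<in>u. LCA rew pun (Imp g (Mod kr i q))"
    proof cases
      case goal
      have "is_L0 q" using world_Tri_Imp(2)[OF u goal] .
      have "LCA rew pun (Imp (Tri i (Imp q (Atom (r i)))) (Mod kr i q))"
        by (rule LCA_taut_consequence2[OF kinds_LCA(1)[OF k \<open>is_L0 q\<close>] kinds_LCA(2)[OF k \<open>is_L q\<close>]])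
          (use \<open>is_L0 q\<close> is_L0_imp_is_L in auto)
      then show ?thesis using goal by blast
    next
      case Mod
      then show ?thesis using kinds_LCA(2)[OF k \<open>is_L q\<close>, of i] by blast
    next
      case Mod_real
      then show ?thesis by (rule world_mem_derivable[OF u])
    qed
  qed
  have B_L: "forced i u \<subseteq> Collect is_L" using forced_is_L[OF u] by blast
  from compatible_world_exists[OF Mod_witness_consistent[OF u m B_L forced_Mod_real_derivable[OF k u]
      Q_Cl Q_Mod]]
  obtain u' where u': "u' \<in> Worlds" "compatible (forced i u \<union> insert p (Neg ` Q)) u'"
    by blast
  have "Erel i u u'" by (rule compatible_forced_Erel[OF u'(2) _ u]) auto
  moreover have "p \<in> u'" by (rule compatible_mem[OF u'(2)]) (use Cl_sub(6)[OF m(1)] in auto)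
  moreover have "q \<notin> u'" if "q \<in> Q" for q
    using compatible_not_mem[OF u'(2)] that Q_Cl by blast
  ultimately show ?thesis using u'(1) unfolding goal_met_def Q_def by blast
qed

definition Copies :: "(('a, 'g) fm set \<times> bool) set" where
  "Copies = Worlds \<times> UNIV"

lemma fst_Copies: "t \<in> Copies \<Longrightarrow> fst t \<in> Worlds"
  unfolding Copies_def by auto

lemma finite_Copies: "finite Copies"
  unfolding Copies_def using finite_Worlds by simp

lemma tag_exists: "\<exists>f. inj_on f Copies \<and> (\<forall>t\<in>Copies. Atom (f t) \<notin> Cl)"
proof -
  have "finite (Atom -` Cl)" by (rule finite_vimageI[OF finite_Cl]) (auto simp: inj_def)
  then have "infinite (UNIV - Atom -` Cl)" using infinite_atoms by auto
  from infinite_arbitrarily_large[OF this]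
  obtain C where C: "finite C" "card C = card Copies" "C \<subseteq> UNIV - Atom -` Cl"
    by blast
  have "card Copies \<le> card C" using C(2) by simp
  from card_le_inj[OF finite_Copies C(1) this]
  obtain f where "f ` Copies \<subseteq> C" "inj_on f Copies" by blast
  then show ?thesis using C(3) by (intro exI[of _ f]) auto
qed

definition tag :: "('a, 'g) fm set \<times> bool \<Rightarrow> 'a" where
  "tag = (SOME f. inj_on f Copies \<and> (\<forall>t\<in>Copies. Atom (f t) \<notin> Cl))"

lemma inj_on_tag: "inj_on tag Copies" and tag_notin_Cl: "t \<in> Copies \<Longrightarrow> Atom (tag t) \<notin> Cl"
  using someI_ex[OF tag_exists] unfolding tag_def[symmetric] by auto

definition marked :: "mkind \<Rightarrow> mkind \<Rightarrow> 'g \<Rightarrow> ('a, 'g) fm set \<Rightarrow> (('a, 'g) fm set \<times> bool) set" where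
  "marked k kr i w = {(u, b). u \<in> Worlds \<and> ((\<exists>p. Mod k i p \<in> w \<and> p \<in> u) \<or>
      (b \<and> Erel i w u \<and> (\<exists>p. Mod kr i p \<in> w \<and> p \<in> u)))}"

definition canon_base :: "'g \<Rightarrow> ('a, 'g) fm set \<Rightarrow> ('a, 'g) fm set" where
  "canon_base i w = {a. Tri i a \<in> w}
     \<union> {Neg (Atom (tag t)) | t. t \<in> Copies \<and> \<not> (snd t \<and> Erel i w (fst t))}
     \<union> {Imp (Atom (tag t)) (Atom (r i)) | t k kr r. (k, kr, r) \<in> kinds \<and> t \<in> marked k kr i w}"

definition canon_state :: "('a, 'g) fm set \<times> bool \<Rightarrow> ('a, 'g) state" where
  "canon_state t = ((\<lambda>i. canon_base i (fst t)), {p. Atom p \<in> fst t} \<union> {tag t})"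

definition canon_states :: "('a, 'g) state set" where
  "canon_states = canon_state ` Copies"

lemma fst_canon_state [simp]: "fst (canon_state t) i = canon_base i (fst t)"
  unfolding canon_state_def by simp

lemma marked_subset_Copies: "marked k kr i w \<subseteq> Copies"
  unfolding marked_def Copies_def by auto

lemma Ball_canon_states: "(\<forall>S\<in>canon_states. P S) \<longleftrightarrow> (\<forall>t\<in>Copies. P (canon_state t))"
  unfolding canon_states_def by blast

lemma tag_in_canon_state:
  assumes "t \<in> Copies" "t' \<in> Copies"
  shows "tag t' \<in> snd (canon_state t) \<longleftrightarrow> t' = t"
proof -
  have "Atom (tag t') \<notin> fst t"
    using tag_notin_Cl[OF assms(2)] Worlds_subset_Cl assms(1) by (auto simp: Copies_def)
  then show ?thesis using inj_onD[OF inj_on_tag _ assms(2,1)] unfolding canon_state_def by auto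
qed

lemma canon_states_subset_states: "canon_states \<subseteq> states"
proof
  fix S assume "S \<in> canon_states"
  then obtain t where t: "t \<in> Copies" "S = canon_state t" unfolding canon_states_def by auto
  have "is_L0 a" if "a \<in> canon_base i (fst t)" for i a
    using that t(1) unfolding canon_base_def Copies_def
    by (auto dest: Worlds_subset_Cl intro: Cl_Tri_is_L0)
  then show "S \<in> states" unfolding states_def canon_state_def t(2) by auto
qed

lemma sat0_canon_state:
  "is_L0 a \<Longrightarrow> a \<in> Cl \<Longrightarrow> t \<in> Copies \<Longrightarrow> sat0 (canon_state t) a \<longleftrightarrow> a \<in> fst t"
proof (induction a)
  case (Atom p)
  then have "p \<noteq> tag t" using tag_notin_Cl[OF Atom.prems(3)] by auto
  then show ?case unfolding canon_state_def by simp
next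
  case (Neg a)
  have "a \<in> Cl" using Neg.prems(2) by (rule Cl_sub)
  then show ?case using Neg world_Neg[OF fst_Copies] by simp
next
  case (Conj a b)
  have "a \<in> Cl" "b \<in> Cl" using Conj.prems(2) by (rule Cl_sub)+
  then show ?case using Conj world_Conj[OF fst_Copies] by simp
next
  case (Tri j a)
  have "a \<in> Cl" using Tri.prems(2) by (rule Cl_sub)
  \<comment> \<open>the tag-formulas in the base mention atoms outside the closure\<close>
  then have "a \<noteq> Neg (Atom (tag t'))" "a \<noteq> Imp (Atom (tag t')) b" if "t' \<in> Copies" for t' b
    using tag_notin_Cl[OF that] Cl_sub(1) Cl_Imp(1) by blast+
  then have "a \<in> canon_base j (fst t) \<longleftrightarrow> Tri j a \<in> fst t"
    unfolding canon_base_def using marked_subset_Copies by blast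
  then show ?case unfolding canon_state_def by simp
qed simp_all

lemma relE_canon_state:
  assumes v: "v \<in> Worlds" and t: "t \<in> Copies"
  shows "relE i (canon_state (v, c)) (canon_state t) \<longleftrightarrow> snd t \<and> Erel i v (fst t)"
proof
  assume "relE i (canon_state (v, c)) (canon_state t)"
  moreover have "Neg (Atom (tag t)) \<in> canon_base i v" if "\<not> (snd t \<and> Erel i v (fst t))"
    using that t unfolding canon_base_def by blast
  ultimately show "snd t \<and> Erel i v (fst t)"
    using tag_in_canon_state[OF t t] unfolding relE_def canon_state_def by fastforce
next
  assume h: "snd t \<and> Erel i v (fst t)"
  show "relE i (canon_state (v, c)) (canon_state t)" unfolding relE_def
  proof
    fix a assume "a \<in> fst (canon_state (v, c)) i"
    then consider (tri) "Tri i a \<in> v"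
      | (neg) t' where "a = Neg (Atom (tag t'))" "t' \<in> Copies" "\<not> (snd t' \<and> Erel i v (fst t'))"
      | (imp) t' k kr r where "a = Imp (Atom (tag t')) (Atom (r i))" "(k, kr, r) \<in> kinds"
          "t' \<in> marked k kr i v"
      unfolding canon_state_def canon_base_def by auto
    then show "sat0 (canon_state t) a"
    proof cases
      case tri
      then have "a \<in> fst t" using h unfolding Erel_def by auto
      moreover have "a \<in> Cl" "is_L0 a" using Worlds_subset_Cl[OF v tri] Cl_sub Cl_Tri_is_L0 by blast+
      ultimately show ?thesis using sat0_canon_state t by blast
    next
      case neg
      then show ?thesis using h tag_in_canon_state[OF t neg(2)] by auto
    next
      case imp
      have t': "t' \<in> Copies" using imp(3) marked_subset_Copies by blast
      show ?thesis
      proof (cases "t' = t")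
        case True
        then have "Atom (r i) \<in> fst t"
          using imp(2,3) h unfolding marked_def Erel_def by (cases t) auto
        then show ?thesis using imp(1) unfolding canon_state_def by simp
      qed (use imp tag_in_canon_state[OF t t'] in simp)
    qed
  qed
qed

lemma Imp_in_canon_base:
  assumes k: "(k, kr, r) \<in> kinds"
  shows "Imp a (Atom (r i)) \<in> canon_base i v \<longleftrightarrow>
    Tri i (Imp a (Atom (r i))) \<in> v \<or> (\<exists>t. a = Atom (tag t) \<and> t \<in> marked k kr i v)"
proof -
  \<comment> \<open>disjointness of rew and pun lets r determine the kind\<close>
  have "(\<exists>t k' kr' r'. a = Atom (tag t) \<and> r i = r' i \<and> (k', kr', r') \<in> kinds \<and> t \<in> marked k' kr' i v)
    \<longleftrightarrow> (\<exists>t. a = Atom (tag t) \<and> t \<in> marked k kr i v)"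
    using kinds_unique[OF k] k by metis
  then show ?thesis unfolding canon_base_def by auto
qed

lemma relGoal_canon_state:
  assumes k: "(k, kr, r) \<in> kinds" and v: "v \<in> Worlds" and t: "t \<in> Copies"
  shows "relGoal r i (canon_state (v, c)) (canon_state t) \<longleftrightarrow>
    goal_met r i v (fst t) \<or> t \<in> marked k kr i v"
proof
  assume "relGoal r i (canon_state (v, c)) (canon_state t)"
  then obtain a where a: "is_L0 a" "Imp a (Atom (r i)) \<in> canon_base i v" "sat0 (canon_state t) a"
    unfolding relGoal_def by auto
  from a(2) consider (tri) "Tri i (Imp a (Atom (r i))) \<in> v"
    | (tag) t' where "a = Atom (tag t')" "t' \<in> marked k kr i v"
    unfolding Imp_in_canon_base[OF k] by blast
  then show "goal_met r i v (fst t) \<or> t \<in> marked k kr i v"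
  proof cases
    case tri
    then have "a \<in> fst t" using sat0_canon_state[OF a(1) world_Tri_Imp(1)[OF v tri] t] a(3) by blast
    then show ?thesis using tri unfolding goal_met_def by blast
  next
    case tag
    have "t' \<in> Copies" using tag(2) marked_subset_Copies by blast
    then have "t' = t" using a(3) tag(1) tag_in_canon_state[OF t] by simp
    then show ?thesis using tag by blast
  qed
next
  assume "goal_met r i v (fst t) \<or> t \<in> marked k kr i v"
  then show "relGoal r i (canon_state (v, c)) (canon_state t)"
  proof
    assume "goal_met r i v (fst t)"
    then obtain a where a: "Tri i (Imp a (Atom (r i))) \<in> v" "a \<in> fst t" unfolding goal_met_def by blast
    note a_Cl = world_Tri_Imp[OF v a(1)]
    have "sat0 (canon_state t) a" using sat0_canon_state[OF a_Cl(2,1) t] a(2) by simp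
    moreover have "Imp a (Atom (r i)) \<in> canon_base i v"
      by (rule Imp_in_canon_base[OF k, THEN iffD2]) (use a(1) in blast)
    ultimately show ?thesis using a_Cl(2) unfolding relGoal_def by auto
  next
    assume "t \<in> marked k kr i v"
    then have "Imp (Atom (tag t)) (Atom (r i)) \<in> canon_base i v"
      by (intro Imp_in_canon_base[OF k, THEN iffD2]) blast
    moreover have "sat0 (canon_state t) (Atom (tag t))" using tag_in_canon_state[OF t t] by simp
    ultimately show ?thesis unfolding relGoal_def by (intro exI[of _ "Atom (tag t)"]) simp
  qed
qed

section \<open>Truth lemma and completeness\<close>

lemma Box_in_world_iff:
  assumes "v \<in> Worlds" "Box i a \<in> Cl"
  shows "(\<forall>u\<in>Worlds. Erel i v u \<longrightarrow> a \<in> u) \<longleftrightarrow> Box i a \<in> v"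
  using Box_witness[OF assms] unfolding Erel_def by blast

lemma Mod_in_world_iff:
  assumes k: "(k, kr, r) \<in> kinds" and v: "v \<in> Worlds" and m: "Mod k i a \<in> Cl"
  shows "(\<forall>t\<in>Copies. a \<in> fst t \<longrightarrow> goal_met r i v (fst t) \<or> t \<in> marked k kr i v) \<longleftrightarrow> Mod k i a \<in> v"
proof
  assume h: "\<forall>t\<in>Copies. a \<in> fst t \<longrightarrow> goal_met r i v (fst t) \<or> t \<in> marked k kr i v"
  show "Mod k i a \<in> v"
  proof (rule ccontr)
    assume "Mod k i a \<notin> v"
    then obtain u where "u \<in> Worlds" "a \<in> u" "\<not> goal_met r i v u" "\<forall>q. Mod k i q \<in> v \<longrightarrow> q \<notin> u"
      using Mod_witness[OF k v m] by blast
    then show False using h[rule_format, of "(u, False)"] unfolding marked_def Copies_def by auto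
  qed
qed (auto simp: marked_def Copies_def)

lemma Mod_real_in_world_iff:
  assumes k: "(k, kr, r) \<in> kinds" and v: "v \<in> Worlds" and m: "Mod kr i a \<in> Cl"
  shows "(\<forall>t\<in>Copies. a \<in> fst t \<and> snd t \<and> Erel i v (fst t) \<longrightarrow>
      goal_met r i v (fst t) \<or> t \<in> marked k kr i v) \<longleftrightarrow> Mod kr i a \<in> v"
proof
  assume h: "\<forall>t\<in>Copies. a \<in> fst t \<and> snd t \<and> Erel i v (fst t) \<longrightarrow>
      goal_met r i v (fst t) \<or> t \<in> marked k kr i v"
  show "Mod kr i a \<in> v"
  proof (rule ccontr)
    assume "Mod kr i a \<notin> v"
    then obtain u where "u \<in> Worlds" "Erel i v u" "a \<in> u" "\<not> goal_met r i v u"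
      "\<forall>q. Mod k i q \<in> v \<longrightarrow> q \<notin> u" "\<forall>q. Mod kr i q \<in> v \<longrightarrow> q \<notin> u"
      using Mod_real_witness[OF k v m] by blast
    then show False using h[rule_format, of "(u, True)"] unfolding marked_def Copies_def by auto
  qed
qed (auto simp: marked_def Copies_def)

lemma sat_canon_Box:
  assumes v: "v \<in> Worlds" and "Box i a \<in> Cl"
    and IH: "\<And>t. t \<in> Copies \<Longrightarrow> sat rew pun canon_states (canon_state t) a \<longleftrightarrow> a \<in> fst t"
  shows "sat rew pun canon_states (canon_state (v, c)) (Box i a) \<longleftrightarrow> Box i a \<in> v"
proof -
  have "sat rew pun canon_states (canon_state (v, c)) (Box i a) \<longleftrightarrow>
      (\<forall>t\<in>Copies. snd t \<and> Erel i v (fst t) \<longrightarrow> a \<in> fst t)"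
    unfolding sat.simps Ball_canon_states by (rule ball_cong) (simp_all add: relE_canon_state[OF v] IH)
  also have "\<dots> \<longleftrightarrow> Box i a \<in> v"
    using Box_in_world_iff[OF v assms(2)] by (auto simp: Copies_def)
  finally show ?thesis .
qed

lemma sat_canon_Mod:
  assumes k: "(k, kr, r) \<in> kinds" and v: "v \<in> Worlds" and "Mod m i a \<in> Cl" "m = k \<or> m = kr"
    and IH: "\<And>t. t \<in> Copies \<Longrightarrow> sat rew pun canon_states (canon_state t) a \<longleftrightarrow> a \<in> fst t"
  shows "sat rew pun canon_states (canon_state (v, c)) (Mod m i a) \<longleftrightarrow> Mod m i a \<in> v"
  using assms(4)
proof
  assume m: "m = k"
  have "sat rew pun canon_states (canon_state (v, c)) (Mod k i a) \<longleftrightarrow>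
      (\<forall>t\<in>Copies. a \<in> fst t \<longrightarrow> goal_met r i v (fst t) \<or> t \<in> marked k kr i v)"
    unfolding sat_Mod_kinds(1)[OF k] Ball_canon_states
    by (rule ball_cong) (simp_all add: relGoal_canon_state[OF k v] IH)
  also have "\<dots> \<longleftrightarrow> Mod k i a \<in> v" using Mod_in_world_iff[OF k v] assms(3) m by simp
  finally show ?thesis using m by simp
next
  assume m: "m = kr"
  have "sat rew pun canon_states (canon_state (v, c)) (Mod kr i a) \<longleftrightarrow>
      (\<forall>t\<in>Copies. a \<in> fst t \<and> snd t \<and> Erel i v (fst t) \<longrightarrow>
        goal_met r i v (fst t) \<or> t \<in> marked k kr i v)"
    unfolding sat_Mod_kinds(2)[OF k] Ball_canon_states
    by (rule ball_cong) (simp_all add: relGoal_canon_state[OF k v] relE_canon_state[OF v] IH)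
  also have "\<dots> \<longleftrightarrow> Mod kr i a \<in> v" using Mod_real_in_world_iff[OF k v] assms(3) m by simp
  finally show ?thesis using m by simp
qed

lemma truth_lemma:
  "c \<in> Cl \<Longrightarrow> t \<in> Copies \<Longrightarrow> sat rew pun canon_states (canon_state t) c \<longleftrightarrow> c \<in> fst t"
proof (induction c arbitrary: t)
  case (Atom p)
  then show ?case using sat0_canon_state[of "Atom p" t] by simp
next
  case (Tri i a)
  then show ?case using sat0_canon_state[of "Tri i a" t] Cl_Tri_is_L0 by simp
next
  case (Neg a)
  have "a \<in> Cl" using Neg.prems(1) by (rule Cl_sub)
  then show ?case using Neg world_Neg[OF fst_Copies] by simp
next
  case (Conj a b)
  have "a \<in> Cl" "b \<in> Cl" using Conj.prems(1) by (rule Cl_sub)+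
  then show ?case using Conj world_Conj[OF fst_Copies] by simp
next
  case (Box i a)
  have "a \<in> Cl" using Box.prems(1) by (rule Cl_sub)
  have "sat rew pun canon_states (canon_state (fst t, snd t)) (Box i a) \<longleftrightarrow> Box i a \<in> fst t"
    by (rule sat_canon_Box[OF fst_Copies[OF Box.prems(2)] Box.prems(1)])
      (rule Box.IH[OF \<open>a \<in> Cl\<close>])
  then show ?case by simp
next
  case (Mod m i a)
  have "a \<in> Cl" using Mod.prems(1) by (rule Cl_sub)
  obtain k kr r where k: "(k, kr, r) \<in> kinds" and m: "m = k \<or> m = kr" using kinds_cover by blast
  have "sat rew pun canon_states (canon_state (fst t, snd t)) (Mod m i a) \<longleftrightarrow> Mod m i a \<in> fst t"
    by (rule sat_canon_Mod[OF k fst_Copies[OF Mod.prems(2)] Mod.prems(1) m])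
      (rule Mod.IH[OF \<open>a \<in> Cl\<close>])
  then show ?case by simp
qed

theorem LCA_complete: "valid rew pun \<phi> \<Longrightarrow> LCA rew pun \<phi>"
proof (rule ccontr)
  assume valid: "valid rew pun \<phi>" and not_derivable: "\<not> LCA rew pun \<phi>"
  have "consistent rew pun {Neg \<phi>}"
    unfolding consistent_def
  proof (rule notI, elim exE conjE)
    fix xs assume xs: "set xs \<subseteq> {Neg \<phi>}" "LCA rew pun (Neg (conjs xs))"
    have "LCA rew pun \<phi>"
      by (rule LCA_taut_consequence1[OF xs(2)]) (use xs(1) is_L_\<phi> in auto)
    with not_derivable show False ..
  qed
  from compatible_world_exists[OF this]
  obtain w where w: "w \<in> Worlds" "compatible {Neg \<phi>} w" by blast
  then have "\<phi> \<notin> w" using compatible_not_mem \<phi>_in_Cl by blast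
  then have "\<not> sat rew pun canon_states (canon_state (w, True)) \<phi>"
    using truth_lemma[OF \<phi>_in_Cl, of "(w, True)"] w(1) by (simp add: Copies_def)
  moreover have "canon_state (w, True) \<in> canon_states"
    using w(1) unfolding canon_states_def Copies_def by auto
  ultimately show False using valid canon_states_subset_states unfolding valid_def by blast
qed

end

theorem theorem2:
  fixes rew pun :: "'g::finite \<Rightarrow> 'a::countable"
  assumes "infinite (UNIV :: 'a set)"
    and "inj rew" and "inj pun" and "range rew \<inter> range pun = {}"
    and "is_L p"
  shows "LCA rew pun p \<longleftrightarrow> valid rew pun p"
proof
  assume "LCA rew pun p"
  then show "valid rew pun p" by (rule LCA_sound)
next
  assume "valid rew pun p"
  interpret countermodel rew pun p using assms by unfold_locales auto
  show "LCA rew pun p" using LCA_complete \<open>valid rew pun p\<close> .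
qed

end
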